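(* Let $L$ be an oriented graphical virtual link, let $D$ be a graphical (i.e. checkerboard colorable) diagram of $L$, and let $G_D$ be a signed Tait graph of $D$. Then $$V_L(t)=(-t^{-\frac{3}{4}})^{-w(D)}\,F[G_D]\big(t^{-\frac14},\,t^{\frac14},\,-t^{-\frac12}-t^{\frac12}\big).$$
   Context: Virtual links are equivalence classes of virtual link diagrams (plane curves with real and virtual crossings) under generalized Reidemeister moves. A virtual link is graphical if it is represented by a diagram obtained from a signed cyclic graph (graph with cyclic order of half-edges at each vertex and edge signs) by the medial construction; equivalently (by a result of the paper) it has a checkerboard colorable diagram. A diagram is checkerboard colorable if one can color a small neighbourhood of one side of each arc so that near each real crossing the colored sides alternate and near virtual crossings the colorings of the two strands pass through independently. Bracket polynomial: $\langle D\rangle(A,B,d)=\sum_{\sigma}A^{\alpha(\sigma)}B^{\beta(\sigma)}d^{|\sigma|-1}$ over all states $\sigma$ (choice of $A$- or $B$-smoothing at each real crossing), $\alpha,\beta$ the numbers of $A$-, $B$-smoothings, $|\sigma|$ the number of closed curves. The writhe $w(D)$ is the sum of the oriented signs $\pm1$ of the real crossings. The Jones polynomial is $V_L(t)=f(t^{-1/4})$ where $f(A)=(-A^3)^{-w(D)}\langle D\rangle(A,A^{-1},-A^2-A^{-2})$. Signed Tait graph (Chmutov–Pak): given a checkerboard coloring of $D$, thicken $D$ to a surface in which bands at virtual crossings pass without touching; the colored neighbourhoods form annuli whose exterior circles run along the diagram, jumping between strands at real crossings so that the two colored corners of each crossing lie on them. Replace each real crossing by an edge-ribbon joining the exterior-circle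 arcs at the colored corners and glue discs along the interior circles; this gives an orientable signed ribbon graph, i.e. a signed cyclic graph $G_D$ (vertices = capped annuli, edges = real crossings, sign $+$ iff the $A$-smoothing joins the two colored corners). The polynomial $F[G]$ of a signed cyclic graph: edges may be "marked"; for an unmarked edge $e$, $G-e$ deletes $e$, $G(\bar e)$ keeps and marks $e$; $F[G]=B\,F[G-e]+A\,F[G(\bar e)]$ for positive $e$, $F[G]=A\,F[G-e]+B\,F[G(\bar e)]$ for negative $e$; for a spanning subgraph $H$ with all edges marked, $F[H]=d^{bc(H)-1}$, $bc(H)$ the number of boundary components of the ribbon graph of $H$. *)

theory Defs
  imports Complex_Main
begin

text \<open>A virtual link diagram up to virtual detour moves is encoded as follows. Each real crossing c has four ends
  (c,0),(c,1),(c,2),(c,3), numbered counterclockwise in the plane; the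
  over-strand runs through the ends 0 and 2, the under-strand through 1 and 3.
  The arcs of the diagram (which may pass through virtual crossings) are encoded
  by the fixed-point-free involution dg_arc on ends. Components without real
  crossings are counted by dg_loops. The orientation of the link is given by
  marking the ends at which the oriented strand leaves the crossing.
  Corner k of crossing c is the corner between ends k and k+1 (mod 4).\<close>

record 'c vdiagram =
  dg_xings :: "'c set"
  dg_arc :: "'c \<times> nat \<Rightarrow> 'c \<times> nat"
  dg_out :: "'c \<times> nat \<Rightarrow> bool"
  dg_loops :: nat

definition dg_ends :: "'c vdiagram \<Rightarrow> ('c \<times> nat) set" where
  "dg_ends D = dg_xings D \<times> {..<4}"

definition vdiagram_wf :: "'c vdiagram \<Rightarrow> bool" where
  "vdiagram_wf D \<longleftrightarrow> finite (dg_xings D)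
     \<and> (\<forall>e\<in>dg_ends D. dg_arc D e \<in> dg_ends D \<and> dg_arc D e \<noteq> e \<and> dg_arc D (dg_arc D e) = e)
     \<and> (dg_xings D \<noteq> {} \<or> dg_loops D > 0)"

definition oriented :: "'c vdiagram \<Rightarrow> bool" where
  "oriented D \<longleftrightarrow>
     (\<forall>c\<in>dg_xings D. dg_out D (c,0) \<noteq> dg_out D (c,2) \<and> dg_out D (c,1) \<noteq> dg_out D (c,3))
     \<and> (\<forall>e\<in>dg_ends D. dg_out D (dg_arc D e) \<longleftrightarrow> \<not> dg_out D e)"

text \<open>Sign of a real crossing: +1 iff the outgoing under-end is obtained from the
  outgoing over-end by a counterclockwise quarter turn (right-handed crossing).\<close>
definition xsign :: "'c vdiagram \<Rightarrow> 'c \<Rightarrow> int" where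
  "xsign D c =
     (let ov = (if dg_out D (c,0) then 0 else 2 :: nat);
          u = (if dg_out D (c,1) then 1 else 3 :: nat)
      in if u = (ov + 1) mod 4 then 1 else -1)"

definition writhe :: "'c vdiagram \<Rightarrow> int" where
  "writhe D = (\<Sum>c\<in>dg_xings D. xsign D c)"

text \<open>Smoothing of crossing c: the A-smoothing joins the two A-regions (corners
  0 and 2), i.e. it pairs the ends 0--3 and 1--2; the B-smoothing pairs 0--1 and
  2--3. A state is given by the set S of crossings receiving the A-smoothing.\<close>
definition smooth :: "'c set \<Rightarrow> 'c \<times> nat \<Rightarrow> 'c \<times> nat" where
  "smooth S e = (case e of (c,k) \<Rightarrow>
     if c \<in> S then (c, 3 - k) else (c, if even k then k + 1 else k - 1))"

text \<open>Number of closed curves of the state S: connected classes of ends under the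
  arcs and the smoothing connections, plus the crossingless components.\<close>
definition state_circles :: "'c vdiagram \<Rightarrow> 'c set \<Rightarrow> nat" where
  "state_circles D S =
     card (dg_ends D // ({(e, smooth S e) | e. e \<in> dg_ends D} \<union> {(e, dg_arc D e) | e. e \<in> dg_ends D})\<^sup>*)
     + dg_loops D"

definition bracket :: "'c vdiagram \<Rightarrow> 'a::field \<Rightarrow> 'a \<Rightarrow> 'a \<Rightarrow> 'a" where
  "bracket D A B d =
     (\<Sum>S\<in>Pow (dg_xings D). A ^ card S * B ^ card (dg_xings D - S) * d powi (int (state_circles D S) - 1))"

definition jones :: "'c vdiagram \<Rightarrow> real \<Rightarrow> real" where
  "jones D t =
     (let A = t powr (-1/4) in
       (- (A ^ 3)) powi (- writhe D) * bracket D A (inverse A) (- (A ^ 2) - (inverse A) ^ 2))"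

text \<open>A coloring is given by col c: if col c, the corners 0 and 2 (between ends
  0,1 and 2,3) are colored, otherwise corners 1 and 3. Walking out of crossing c
  along end i, corner i lies on the left; arriving at c' through end j, the left
  side is corner j-1. The coloring of each side of an arc must agree at both ends.\<close>
definition colored_corner :: "('c \<Rightarrow> bool) \<Rightarrow> 'c \<Rightarrow> nat \<Rightarrow> bool" where
  "colored_corner col c k \<longleftrightarrow> (col c \<longleftrightarrow> even k)"

definition checkerboard_coloring :: "'c vdiagram \<Rightarrow> ('c \<Rightarrow> bool) \<Rightarrow> bool" where
  "checkerboard_coloring D col \<longleftrightarrow>
     (\<forall>c\<in>dg_xings D. \<forall>i<4. case dg_arc D (c,i) of (c',j) \<Rightarrow>
        (colored_corner col c i \<longleftrightarrow> colored_corner col c' ((j + 3) mod 4)))"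

text \<open>A signed cyclic graph (orientable signed ribbon graph): vertices, half-edges,
  incidence, the cyclic successor of each half-edge around its vertex, the
  edge involution pairing the two half-edges of an edge, and the edge signs.\<close>
record ('v, 'h) scgraph =
  sg_verts :: "'v set"
  sg_hes :: "'h set"
  sg_vert :: "'h \<Rightarrow> 'v"
  sg_rot :: "'h \<Rightarrow> 'h"
  sg_opp :: "'h \<Rightarrow> 'h"
  sg_pos :: "'h \<Rightarrow> bool"

definition sg_edges :: "('v,'h) scgraph \<Rightarrow> 'h set set" where
  "sg_edges G = (\<lambda>h. {h, sg_opp G h}) ` sg_hes G"

definition rot_sub :: "('v,'h) scgraph \<Rightarrow> 'h set \<Rightarrow> 'h \<Rightarrow> 'h" where
  "rot_sub G S h = (sg_rot G ^^ (LEAST k. 0 < k \<and> (sg_rot G ^^ k) h \<in> S)) h"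

definition orbits :: "('h \<Rightarrow> 'h) \<Rightarrow> 'h set \<Rightarrow> 'h set set" where
  "orbits f S = (\<lambda>h. {(f ^^ n) h | n. True}) ` S"

text \<open>Number of boundary components of the ribbon subgraph with half-edge set S:
  the faces (orbits of rotation-after-edge-involution) plus the vertices without
  half-edges in S (each a disc with one boundary circle).\<close>
definition bc :: "('v,'h) scgraph \<Rightarrow> 'h set \<Rightarrow> nat" where
  "bc G S = card (orbits (\<lambda>h. rot_sub G S (sg_opp G h)) S)
            + card {v \<in> sg_verts G. \<forall>h\<in>S. sg_vert G h \<noteq> v}"

definition edge_pos :: "('v,'h) scgraph \<Rightarrow> 'h set \<Rightarrow> bool" where
  "edge_pos G e = sg_pos G (SOME h. h \<in> e)"

text \<open>F[G], the full expansion of the deletion/marking recursion: a sum over the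
  sets of marked edges (spanning subgraphs, given by their half-edge sets S).\<close>
definition Fpoly :: "('v,'h) scgraph \<Rightarrow> 'a::field \<Rightarrow> 'a \<Rightarrow> 'a \<Rightarrow> 'a" where
  "Fpoly G A B d =
     (\<Sum>S\<in>{S. S \<subseteq> sg_hes G \<and> (\<forall>h\<in>S. sg_opp G h \<in> S)}.
        (\<Prod>e\<in>sg_edges G. if e \<subseteq> S then (if edge_pos G e then A else B)
                                    else (if edge_pos G e then B else A))
        * d powi (int (bc G S) - 1))"

text \<open>Half-edges are the colored corners (c,k). The exterior circle of a colored
  annulus leaves the colored corner k of c along end k+1 and arrives at the
  colored corner j of c' where (c',j) is the other end of that arc. Vertices are
  the orbits of this successor map, plus one isolated vertex for every
  crossingless component. The edge of crossing c joins its two colored corners and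
  is positive iff the A-smoothing joins them, i.e. iff col c.\<close>
definition tait_rot :: "'c vdiagram \<Rightarrow> 'c \<times> nat \<Rightarrow> 'c \<times> nat" where
  "tait_rot D h = (case h of (c,k) \<Rightarrow> dg_arc D (c, (k + 1) mod 4))"

definition tait_hes :: "'c vdiagram \<Rightarrow> ('c \<Rightarrow> bool) \<Rightarrow> ('c \<times> nat) set" where
  "tait_hes D col = {(c,k). c \<in> dg_xings D \<and> k < 4 \<and> colored_corner col c k}"

definition tait_graph :: "'c vdiagram \<Rightarrow> ('c \<Rightarrow> bool) \<Rightarrow> (('c \<times> nat) set + nat, 'c \<times> nat) scgraph" where
  "tait_graph D col =
     \<lparr> sg_verts = Inl ` orbits (tait_rot D) (tait_hes D col) \<union> Inr ` {..<dg_loops D},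
       sg_hes = tait_hes D col,
       sg_vert = (\<lambda>h. Inl {(tait_rot D ^^ n) h | n. True}),
       sg_rot = tait_rot D,
       sg_opp = (\<lambda>(c,k). (c, (k + 2) mod 4)),
       sg_pos = (\<lambda>(c,k). col c) \<rparr>"

end

theory Submission
  imports Defs "HOL-Combinatorics.Permutations"
begin

text \<open>A state S of the diagram and its set of marked Tait-graph edges (the crossings whose
  chosen smoothing joins the two coloured corners) determine each other, and the bracket weight
  \<open>A^|S| B^|X - S|\<close> is exactly the product of the edge weights in the expansion of F. It
  remains to see that the state circles are the boundary components of the marked ribbon
  subgraph M. The coloured corners met along the state circles are the orbits of the
  permutation \<open>\<tau> = arc \<circ> smoothing\<close> of the coloured corners, and every state circle meets
  one. This \<open>\<tau>\<close> agrees with the rotation of the Tait graph except at the half-edges of M,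
  where it first crosses the edge. Hence the first-return map of \<open>\<tau>\<close> to M is the face
  permutation of M, and the \<open>\<tau>\<close>-orbits avoiding M are the vertices of the Tait graph not
  incident with M.\<close>

section \<open>Forward orbits\<close>

definition fwd_orbit :: "('a \<Rightarrow> 'a) \<Rightarrow> 'a \<Rightarrow> 'a set" where
  "fwd_orbit f x = {(f ^^ n) x | n. True}"

lemma orbits_eq_image_fwd_orbit: "orbits f S = fwd_orbit f ` S"
  unfolding orbits_def fwd_orbit_def ..

lemma funpow_in_fwd_orbit: "(f ^^ n) x \<in> fwd_orbit f x"
  unfolding fwd_orbit_def by blast

lemma self_in_fwd_orbit: "x \<in> fwd_orbit f x"
  using funpow_in_fwd_orbit[of 0] by simp

lemma fwd_orbit_step: "y \<in> fwd_orbit f x \<Longrightarrow> f y \<in> fwd_orbit f x"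
  unfolding fwd_orbit_def by (auto intro: exI[of _ "Suc _"])

lemma fwd_orbit_trans: "y \<in> fwd_orbit f x \<Longrightarrow> z \<in> fwd_orbit f y \<Longrightarrow> z \<in> fwd_orbit f x"
  unfolding fwd_orbit_def by (auto simp flip: funpow_add comp_apply[of "f ^^ _"])

lemma fwd_orbit_cong:
  assumes "\<And>y. y \<in> fwd_orbit f x \<Longrightarrow> g y = f y"
  shows "fwd_orbit g x = fwd_orbit f x"
proof -
  have "(g ^^ n) x = (f ^^ n) x" for n
    by (induction n) (simp_all add: assms funpow_in_fwd_orbit)
  then show ?thesis
    unfolding fwd_orbit_def by simp
qed

lemma card_image_eq_if_same_fibres:
  assumes "\<And>x y. x \<in> C \<Longrightarrow> y \<in> C \<Longrightarrow> f x = f y \<longleftrightarrow> g x = g y"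
  shows "card (f ` C) = card (g ` C)"
proof -
  define h where "h K = g (SOME x. x \<in> C \<and> f x = K)" for K
  have h: "h (f x) = g x" if "x \<in> C" for x
    using someI_ex[of "\<lambda>z. z \<in> C \<and> f z = f x"] that assms unfolding h_def by blast
  then have "bij_betw h (f ` C) (g ` C)"
    using assms by (auto simp: bij_betw_def inj_on_def image_iff)
  then show ?thesis
    by (rule bij_betw_same_card)
qed

locale perm_on =
  fixes f :: "'a \<Rightarrow> 'a" and C :: "'a set"
  assumes finite: "finite C"
    and maps_to: "\<And>x. x \<in> C \<Longrightarrow> f x \<in> C"
    and inj: "inj_on f C"
begin

lemma funpow_in: "x \<in> C \<Longrightarrow> (f ^^ n) x \<in> C"
  by (induction n) (simp_all add: maps_to)

lemma fwd_orbit_subset: "x \<in> C \<Longrightarrow> fwd_orbit f x \<subseteq> C"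
  unfolding fwd_orbit_def using funpow_in by blast

lemma periodic:
  assumes "x \<in> C"
  obtains p where "p > 0" "(f ^^ p) x = x"
proof -
  define g where "g y = (if y \<in> C then f y else y)" for y
  have "f ` C = C"
    using endo_inj_surj[OF finite _ inj] maps_to by blast
  then have "bij_betw g C C"
    using inj unfolding bij_betw_def by (simp add: g_def cong: inj_on_cong image_cong)
  then have "permutation g"
    by (intro permutes_imp_permutation[OF finite] bij_imp_permutes) (simp_all add: g_def)
  then obtain p where "p > 0" "(g ^^ p) x = x"
    by (rule permutation_self)
  moreover have "(g ^^ n) x = (f ^^ n) x" for n
    by (induction n) (simp_all add: g_def funpow_in assms)
  ultimately show ?thesis
    using that by simp
qed

lemma fwd_orbit_sym:
  assumes "x \<in> C" "y \<in> fwd_orbit f x"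
  shows "x \<in> fwd_orbit f y"
proof -
  obtain n where n: "y = (f ^^ n) x"
    using assms(2) unfolding fwd_orbit_def by blast
  obtain p where p: "p > 0" "(f ^^ p) x = x"
    using periodic[OF assms(1)] .
  have "(f ^^ (p * n)) x = x"
    using p(2) by (induction n) (simp_all add: funpow_add)
  moreover have "(f ^^ (p * n - n)) y = (f ^^ (p * n - n + n)) x"
    unfolding n by (simp add: funpow_add)
  moreover have "p * n - n + n = p * n"
    using p(1) by simp
  ultimately have "(f ^^ (p * n - n)) y = x"
    by simp
  then show ?thesis
    using funpow_in_fwd_orbit[of "p * n - n" f y] by simp
qed

lemma fwd_orbit_eq_iff:
  assumes "x \<in> C"
  shows "fwd_orbit f x = fwd_orbit f y \<longleftrightarrow> y \<in> fwd_orbit f x"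
proof
  assume y: "y \<in> fwd_orbit f x"
  then have "x \<in> fwd_orbit f y"
    by (rule fwd_orbit_sym[OF assms])
  then show "fwd_orbit f x = fwd_orbit f y"
    using fwd_orbit_trans[OF y] fwd_orbit_trans[of x f y] by blast
next
  show "fwd_orbit f x = fwd_orbit f y \<Longrightarrow> y \<in> fwd_orbit f x"
    using self_in_fwd_orbit by metis
qed

lemma fwd_orbit_disjoint_iff:
  assumes "x \<in> C"
  shows "fwd_orbit f x \<inter> S = {} \<longleftrightarrow> (\<forall>h\<in>S. fwd_orbit f h \<noteq> fwd_orbit f x)"
  using fwd_orbit_eq_iff[OF assms] self_in_fwd_orbit by blast

end

section \<open>First-return maps\<close>

definition return_time :: "('a \<Rightarrow> 'a) \<Rightarrow> 'a set \<Rightarrow> 'a \<Rightarrow> nat" where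
  "return_time f S x = (LEAST k. 0 < k \<and> (f ^^ k) x \<in> S)"

definition first_return :: "('a \<Rightarrow> 'a) \<Rightarrow> 'a set \<Rightarrow> 'a \<Rightarrow> 'a" where
  "first_return f S x = (f ^^ return_time f S x) x"

lemma rot_sub_eq_first_return: "rot_sub G S = first_return (sg_rot G) S"
  unfolding rot_sub_def first_return_def return_time_def ..

lemma funpow_notin_before_return:
  "0 < k \<Longrightarrow> k < return_time f S x \<Longrightarrow> (f ^^ k) x \<notin> S"
  unfolding return_time_def using not_less_Least by blast

lemma return_time_eqI:
  assumes "0 < m" "(f ^^ m) x \<in> S" "\<And>k. 0 < k \<Longrightarrow> k < m \<Longrightarrow> (f ^^ k) x \<notin> S"
  shows "return_time f S x = m"
  unfolding return_time_def using assms by (intro Least_equality) (auto simp: not_less[symmetric])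

context perm_on
begin

lemma return_time_pos_first_return_in:
  assumes "x \<in> C" "x \<in> S"
  shows "0 < return_time f S x" "first_return f S x \<in> S"
proof -
  obtain p where "p > 0" "(f ^^ p) x = x"
    using periodic[OF assms(1)] .
  then have "\<exists>k. 0 < k \<and> (f ^^ k) x \<in> S"
    using assms(2) by auto
  then have "0 < return_time f S x \<and> (f ^^ return_time f S x) x \<in> S"
    unfolding return_time_def by (rule LeastI_ex)
  then show "0 < return_time f S x" "first_return f S x \<in> S"
    unfolding first_return_def by auto
qed

lemma fwd_orbit_first_return_subset:
  assumes "S \<subseteq> C" "x \<in> S"
  shows "fwd_orbit (first_return f S) x \<subseteq> fwd_orbit f x \<inter> S"
proof -
  have "(first_return f S ^^ n) x \<in> fwd_orbit f x \<inter> S" for n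
  proof (induction n)
    case (Suc n)
    let ?y = "(first_return f S ^^ n) x"
    have "first_return f S ?y \<in> fwd_orbit f ?y"
      unfolding first_return_def by (rule funpow_in_fwd_orbit)
    then show ?case
      using Suc assms return_time_pos_first_return_in[of ?y] fwd_orbit_trans by auto
  qed (simp add: assms self_in_fwd_orbit)
  then show ?thesis
    unfolding fwd_orbit_def by blast
qed

lemma funpow_in_fwd_orbit_first_return:
  assumes "S \<subseteq> C" "x \<in> S" "(f ^^ n) x \<in> S"
  shows "(f ^^ n) x \<in> fwd_orbit (first_return f S) x"
  using assms(2,3)
proof (induction n arbitrary: x rule: less_induct)
  case (less n)
  let ?r = "return_time f S x"
  show ?case
  proof (cases "n = 0")
    case False
    have r: "0 < ?r" "first_return f S x \<in> S"
      using return_time_pos_first_return_in less.prems assms(1) by auto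
    then have "?r \<le> n"
      using funpow_notin_before_return[of n f S x] False less.prems(2) by force
    then have "(f ^^ n) x = (f ^^ (n - ?r)) (first_return f S x)"
      unfolding first_return_def by (simp flip: funpow_add[unfolded comp_def, THEN fun_cong])
    moreover have "(f ^^ (n - ?r)) (first_return f S x) \<in> fwd_orbit (first_return f S) (first_return f S x)"
      using less.IH[of "n - ?r"] r False less.prems(2) calculation by simp
    ultimately show ?thesis
      using fwd_orbit_trans fwd_orbit_step[OF self_in_fwd_orbit] by metis
  qed (simp add: self_in_fwd_orbit)
qed

lemma fwd_orbit_first_return:
  assumes "S \<subseteq> C" "x \<in> S"
  shows "fwd_orbit (first_return f S) x = fwd_orbit f x \<inter> S"
proof
  show "fwd_orbit f x \<inter> S \<subseteq> fwd_orbit (first_return f S) x"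
    using funpow_in_fwd_orbit_first_return[OF assms] unfolding fwd_orbit_def by blast
qed (rule fwd_orbit_first_return_subset[OF assms])

lemma card_fwd_orbits_first_return:
  assumes "S \<subseteq> C"
  shows "card (fwd_orbit (first_return f S) ` S) + card {Q \<in> fwd_orbit f ` C. Q \<inter> S = {}}
    = card (fwd_orbit f ` C)"
proof -
  have faces: "card (fwd_orbit (first_return f S) ` S) = card (fwd_orbit f ` S)"
  proof (rule card_image_eq_if_same_fibres)
    fix x y assume "x \<in> S" "y \<in> S"
    then have "x \<in> C"
      using assms by blast
    have "fwd_orbit f x \<inter> S = fwd_orbit f y \<inter> S \<longleftrightarrow> fwd_orbit f x = fwd_orbit f y"
    proof
      assume "fwd_orbit f x \<inter> S = fwd_orbit f y \<inter> S"
      then have "y \<in> fwd_orbit f x"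
        using self_in_fwd_orbit[of y f] \<open>y \<in> S\<close> by blast
      then show "fwd_orbit f x = fwd_orbit f y"
        using fwd_orbit_eq_iff[OF \<open>x \<in> C\<close>] by blast
    qed simp
    then show "fwd_orbit (first_return f S) x = fwd_orbit (first_return f S) y \<longleftrightarrow> fwd_orbit f x = fwd_orbit f y"
      using fwd_orbit_first_return[OF assms \<open>x \<in> S\<close>] fwd_orbit_first_return[OF assms \<open>y \<in> S\<close>] by simp
  qed
  have split: "fwd_orbit f ` C = fwd_orbit f ` S \<union> {Q \<in> fwd_orbit f ` C. Q \<inter> S = {}}"
  proof (intro equalityI subsetI)
    fix Q assume "Q \<in> fwd_orbit f ` C"
    then obtain x where x: "x \<in> C" "Q = fwd_orbit f x"
      by blast
    then show "Q \<in> fwd_orbit f ` S \<union> {Q \<in> fwd_orbit f ` C. Q \<inter> S = {}}"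
      using fwd_orbit_disjoint_iff[OF x(1), of S] by auto
  qed (use assms in auto)
  have "fwd_orbit f ` S \<inter> {Q \<in> fwd_orbit f ` C. Q \<inter> S = {}} = {}"
    using self_in_fwd_orbit[of _ f] by blast
  moreover have "finite (fwd_orbit f ` S)" "finite {Q \<in> fwd_orbit f ` C. Q \<inter> S = {}}"
    using finite_subset[OF assms finite] finite by simp_all
  ultimately have "card (fwd_orbit f ` C) = card (fwd_orbit f ` S) + card {Q \<in> fwd_orbit f ` C. Q \<inter> S = {}}"
    by (subst split) (rule card_Un_disjoint)
  with faces show ?thesis
    by simp
qed

lemma first_return_shift:
  assumes "S \<subseteq> C" "h' \<in> S" "g h = f h'" and agree: "\<And>y. y \<in> C \<Longrightarrow> y \<notin> S \<Longrightarrow> g y = f y"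
  shows "first_return g S h = first_return f S h'"
proof -
  define m where "m = return_time f S h'"
  have "h' \<in> C"
    using assms by blast
  have m: "0 < m" "(f ^^ m) h' \<in> S"
    using return_time_pos_first_return_in[OF \<open>h' \<in> C\<close> assms(2)] unfolding m_def first_return_def by auto
  have path: "(g ^^ j) h = (f ^^ j) h'" if "0 < j" "j \<le> m" for j
    using that
  proof (induction j)
    case (Suc j)
    then show ?case
    proof (cases "j = 0")
      case False
      then have "(f ^^ j) h' \<notin> S"
        using funpow_notin_before_return[of j f S h'] Suc.prems unfolding m_def by simp
      then show ?thesis
        using Suc False agree funpow_in[OF \<open>h' \<in> C\<close>] by simp
    qed (simp add: assms(3))
  qed simp
  have "return_time g S h = m"
    using m path funpow_notin_before_return[of _ f S h'] unfolding m_def[symmetric]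
    by (intro return_time_eqI) (auto simp: m_def)
  then show ?thesis
    unfolding first_return_def using path m(1) by (simp add: m_def)
qed

lemma fwd_orbit_eq_if_disjoint:
  assumes "\<And>y. y \<in> C \<Longrightarrow> y \<notin> S \<Longrightarrow> g y = f y" "x \<in> C" "fwd_orbit f x \<inter> S = {}"
  shows "fwd_orbit g x = fwd_orbit f x"
  using assms fwd_orbit_subset by (intro fwd_orbit_cong) blast

end

lemma disjoint_fwd_orbits_eq:
  assumes "perm_on f C" "perm_on g C" and agree: "\<And>y. y \<in> C \<Longrightarrow> y \<notin> S \<Longrightarrow> g y = f y"
  shows "{Q \<in> fwd_orbit f ` C. Q \<inter> S = {}} = {Q \<in> fwd_orbit g ` C. Q \<inter> S = {}}"
proof -
  have "fwd_orbit f x = fwd_orbit g x" if "x \<in> C" "fwd_orbit f x \<inter> S = {} \<or> fwd_orbit g x \<inter> S = {}" for x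
    using that perm_on.fwd_orbit_eq_if_disjoint[OF assms(1) agree]
      perm_on.fwd_orbit_eq_if_disjoint[OF assms(2), of S f] agree by (metis (no_types))
  then show ?thesis
    by (auto simp: image_iff)
qed

section \<open>Two involutions exchanging a set with its complement\<close>

locale swapping_involutions =
  fixes E C :: "'a set" and s a :: "'a \<Rightarrow> 'a"
  assumes finite: "finite E" and subset: "C \<subseteq> E"
    and s_in: "\<And>x. x \<in> E \<Longrightarrow> s x \<in> E" and s_s: "\<And>x. x \<in> E \<Longrightarrow> s (s x) = x"
    and s_swaps: "\<And>x. x \<in> E \<Longrightarrow> x \<in> C \<longleftrightarrow> s x \<notin> C"
    and a_in: "\<And>x. x \<in> E \<Longrightarrow> a x \<in> E" and a_a: "\<And>x. x \<in> E \<Longrightarrow> a (a x) = x"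
    and a_swaps: "\<And>x. x \<in> E \<Longrightarrow> x \<in> C \<longleftrightarrow> a x \<notin> C"
begin

abbreviation adj :: "('a \<times> 'a) set" where
  "adj \<equiv> {(x, s x) | x. x \<in> E} \<union> {(x, a x) | x. x \<in> E}"

lemma perm_on_comp: "perm_on (\<lambda>x. a (s x)) C"
proof
  show "finite C"
    using finite subset by (rule finite_subset[rotated])
  show "a (s x) \<in> C" if "x \<in> C" for x
    using that subset s_in s_swaps a_swaps by blast
  show "inj_on (\<lambda>x. a (s x)) C"
    using subset s_in s_s a_a by (intro inj_onI) (metis subsetD)
qed

sublocale perm_on "\<lambda>x. a (s x)" C
  by (rule perm_on_comp)

lemma equiv_adj: "equiv UNIV (adj\<^sup>*)"
proof -
  have "sym adj"
    using s_in s_s a_in a_a by (auto simp: sym_def)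
  then show ?thesis
    by (simp add: equivI refl_rtrancl sym_rtrancl trans_rtrancl)
qed

lemma fwd_orbit_in_adj_class:
  assumes "x \<in> C"
  shows "(x, ((\<lambda>x. a (s x)) ^^ n) x) \<in> adj\<^sup>*"
proof (induction n)
  case (Suc n)
  let ?y = "((\<lambda>x. a (s x)) ^^ n) x"
  have "?y \<in> E"
    using funpow_in[OF assms] subset by blast
  then have "(?y, s ?y) \<in> adj" "(s ?y, a (s ?y)) \<in> adj"
    using s_in by blast+
  with Suc have "(x, a (s ?y)) \<in> adj\<^sup>*"
    by (meson rtrancl_into_rtrancl)
  then show ?case
    by simp
qed simp

lemma adj_class_in_fwd_orbit:
  assumes "x \<in> C" "y \<in> C" "(x, y) \<in> adj\<^sup>*"
  shows "y \<in> fwd_orbit (\<lambda>x. a (s x)) x"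
proof -
  let ?O = "fwd_orbit (\<lambda>x. a (s x)) x"
  have "y \<in> E \<and> (if y \<in> C then y \<in> ?O else s y \<in> ?O)"
    using assms(3)
  proof (induction rule: rtrancl_induct)
    case base
    then show ?case
      using assms(1) subset self_in_fwd_orbit by auto
  next
    case (step y z)
    then have y: "y \<in> E" "y \<in> C \<Longrightarrow> y \<in> ?O" "y \<notin> C \<Longrightarrow> s y \<in> ?O"
      by auto
    from step(2) consider "z = s y" | "z = a y"
      by blast
    then show ?case
    proof cases
      case 1
      then have "z \<in> E" "z \<in> C \<longleftrightarrow> y \<notin> C" "s z = y"
        using s_in[OF y(1)] s_swaps[OF y(1)] s_s[OF y(1)] by auto
      then show ?thesis
        using y 1 by auto
    next
      case 2
      then have z: "z \<in> E" "z \<in> C \<longleftrightarrow> y \<notin> C" "a z = y"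
        using a_in[OF y(1)] a_swaps[OF y(1)] a_a[OF y(1)] by auto
      show ?thesis
      proof (cases "y \<in> C")
        case True
        then have "s z \<in> C"
          using z s_swaps[OF z(1)] by simp
        moreover have "a (s (s z)) = y"
          using z s_s by simp
        then have "y \<in> fwd_orbit (\<lambda>x. a (s x)) (s z)"
          using fwd_orbit_step[OF self_in_fwd_orbit, of "\<lambda>x. a (s x)" "s z"] by simp
        then have "s z \<in> ?O"
          using fwd_orbit_sym[OF \<open>s z \<in> C\<close>] fwd_orbit_trans[OF y(2)[OF True]] by blast
        then show ?thesis
          using z True by simp
      next
        case False
        then have "z = a (s (s y))"
          using 2 s_s[OF y(1)] by simp
        then show ?thesis
          using z False fwd_orbit_step[OF y(3)[OF False]] by simp
      qed
    qed
  qed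
  then show ?thesis
    using assms(2) by simp
qed

theorem card_adj_classes: "card (E // adj\<^sup>*) = card (fwd_orbit (\<lambda>x. a (s x)) ` C)"
proof -
  have "E // adj\<^sup>* = (\<lambda>x. adj\<^sup>* `` {x}) ` E"
    unfolding quotient_def by blast
  also have "\<dots> = (\<lambda>x. adj\<^sup>* `` {x}) ` C"
  proof (intro equalityI subsetI)
    fix K assume "K \<in> (\<lambda>x. adj\<^sup>* `` {x}) ` E"
    then obtain x where x: "x \<in> E" "K = adj\<^sup>* `` {x}"
      by blast
    have "(x, s x) \<in> adj\<^sup>*"
      using x(1) by blast
    then have "K = adj\<^sup>* `` {s x}"
      using x(2) equiv_class_eq_iff[OF equiv_adj] by blast
    then show "K \<in> (\<lambda>x. adj\<^sup>* `` {x}) ` C"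
      using x s_swaps[OF x(1)] by (cases "x \<in> C") auto
  qed (use subset in blast)
  finally have "card (E // adj\<^sup>*) = card ((\<lambda>x. adj\<^sup>* `` {x}) ` C)"
    by simp
  also have "\<dots> = card (fwd_orbit (\<lambda>x. a (s x)) ` C)"
  proof (rule card_image_eq_if_same_fibres)
    fix x y assume "x \<in> C" "y \<in> C"
    then have "(x, y) \<in> adj\<^sup>* \<longleftrightarrow> y \<in> fwd_orbit (\<lambda>x. a (s x)) x"
      using adj_class_in_fwd_orbit fwd_orbit_in_adj_class unfolding fwd_orbit_def by blast
    then show "adj\<^sup>* `` {x} = adj\<^sup>* `` {y} \<longleftrightarrow> fwd_orbit (\<lambda>x. a (s x)) x = fwd_orbit (\<lambda>x. a (s x)) y"
      using equiv_class_eq_iff[OF equiv_adj] fwd_orbit_eq_iff[OF \<open>x \<in> C\<close>] by blast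
  qed
  finally show ?thesis .
qed

end

section \<open>State circles of a checkerboard coloured diagram\<close>

lemma dg_ends_iff: "(c, k) \<in> dg_ends D \<longleftrightarrow> c \<in> dg_xings D \<and> k < 4"
  by (simp add: dg_ends_def)

lemma tait_hes_iff: "(c, k) \<in> tait_hes D col \<longleftrightarrow> c \<in> dg_xings D \<and> k < 4 \<and> colored_corner col c k"
  by (simp add: tait_hes_def)

lemma tait_hes_subset_dg_ends: "tait_hes D col \<subseteq> dg_ends D"
  by (auto simp: tait_hes_def dg_ends_def)

lemma less_4_cases: "(k::nat) < 4 \<Longrightarrow> k = 0 \<or> k = 1 \<or> k = 2 \<or> k = 3"
  by auto

lemma
  assumes "vdiagram_wf D" "e \<in> dg_ends D"
  shows dg_arc_in_dg_ends: "dg_arc D e \<in> dg_ends D"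
    and dg_arc_dg_arc: "dg_arc D (dg_arc D e) = e"
  using assms unfolding vdiagram_wf_def by auto

lemma dg_arc_swaps_tait_hes:
  assumes "vdiagram_wf D" "checkerboard_coloring D col" "e \<in> dg_ends D"
  shows "e \<in> tait_hes D col \<longleftrightarrow> dg_arc D e \<notin> tait_hes D col"
proof -
  obtain c i c' j where e: "e = (c, i)" and arc: "dg_arc D (c, i) = (c', j)"
    by (metis surj_pair)
  have ci: "c \<in> dg_xings D" "i < 4" and cj: "c' \<in> dg_xings D" "j < 4"
    using assms(3) dg_arc_in_dg_ends[OF assms(1,3)] e arc by (auto simp: dg_ends_iff)
  have "colored_corner col c i \<longleftrightarrow> colored_corner col c' ((j + 3) mod 4)"
    using assms(2) ci arc unfolding checkerboard_coloring_def by fastforce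
  moreover have "colored_corner col c' ((j + 3) mod 4) \<longleftrightarrow> \<not> colored_corner col c' j"
    using less_4_cases[OF cj(2)] by (auto simp: colored_corner_def)
  ultimately show ?thesis
    using ci cj arc e by (simp add: tait_hes_iff)
qed

lemma
  assumes "e \<in> dg_ends D"
  shows smooth_in_dg_ends: "smooth S e \<in> dg_ends D"
    and smooth_smooth: "smooth S (smooth S e) = e"
    and smooth_swaps_tait_hes: "e \<in> tait_hes D col \<longleftrightarrow> smooth S e \<notin> tait_hes D col"
proof -
  obtain c k where e: "e = (c, k)" "c \<in> dg_xings D" "k < 4"
    using assms by (cases e) (auto simp: dg_ends_iff)
  show "smooth S e \<in> dg_ends D" "smooth S (smooth S e) = e"
    "e \<in> tait_hes D col \<longleftrightarrow> smooth S e \<notin> tait_hes D col"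
    using less_4_cases[OF e(3)] e(2) unfolding e(1)
    by (auto simp: smooth_def dg_ends_iff tait_hes_iff colored_corner_def)
qed

lemma finite_dg_ends: "vdiagram_wf D \<Longrightarrow> finite (dg_ends D)"
  by (simp add: vdiagram_wf_def dg_ends_def)

lemma swapping_involutions_state:
  assumes "vdiagram_wf D" "checkerboard_coloring D col"
  shows "swapping_involutions (dg_ends D) (tait_hes D col) (smooth S) (dg_arc D)"
proof
  show "finite (dg_ends D)" "tait_hes D col \<subseteq> dg_ends D"
    using assms(1) by (simp_all add: finite_dg_ends tait_hes_subset_dg_ends)
  fix e assume "e \<in> dg_ends D"
  then show "smooth S e \<in> dg_ends D" "smooth S (smooth S e) = e"
    "e \<in> tait_hes D col \<longleftrightarrow> smooth S e \<notin> tait_hes D col"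
    "dg_arc D e \<in> dg_ends D" "dg_arc D (dg_arc D e) = e"
    "e \<in> tait_hes D col \<longleftrightarrow> dg_arc D e \<notin> tait_hes D col"
    by (rule smooth_in_dg_ends smooth_smooth smooth_swaps_tait_hes dg_arc_in_dg_ends[OF assms(1)]
        dg_arc_dg_arc[OF assms(1)] dg_arc_swaps_tait_hes[OF assms])+
qed

lemma perm_on_tait_rot:
  assumes "vdiagram_wf D" "checkerboard_coloring D col"
  shows "perm_on (tait_rot D) (tait_hes D col)"
proof
  show "finite (tait_hes D col)"
    using finite_subset[OF tait_hes_subset_dg_ends finite_dg_ends[OF assms(1)]] .
next
  fix h assume "h \<in> tait_hes D col"
  then obtain c k where h: "h = (c, k)" "c \<in> dg_xings D" "k < 4" "colored_corner col c k"
    by (cases h) (auto simp: tait_hes_iff)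
  then have "(c, (k + 1) mod 4) \<in> dg_ends D" "(c, (k + 1) mod 4) \<notin> tait_hes D col"
    using less_4_cases[OF h(3)] by (auto simp: dg_ends_iff tait_hes_iff colored_corner_def)
  then show "tait_rot D h \<in> tait_hes D col"
    using dg_arc_swaps_tait_hes[OF assms] h(1) by (simp add: tait_rot_def)
next
  show "inj_on (tait_rot D) (tait_hes D col)"
  proof (rule inj_onI)
    fix x y assume "x \<in> tait_hes D col" "y \<in> tait_hes D col" and eq: "tait_rot D x = tait_rot D y"
    then obtain c k c' k' where xy: "x = (c, k)" "y = (c', k')" "c \<in> dg_xings D" "k < 4" "c' \<in> dg_xings D" "k' < 4"
      by (cases x, cases y) (auto simp: tait_hes_iff)
    then have "(c, (k + 1) mod 4) \<in> dg_ends D" "(c', (k' + 1) mod 4) \<in> dg_ends D"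
      by (simp_all add: dg_ends_iff)
    with eq have "(c, (k + 1) mod 4) = (c', (k' + 1) mod 4)"
      unfolding xy tait_rot_def by (metis case_prod_conv dg_arc_dg_arc[OF assms(1)])
    then show "x = y"
      using less_4_cases[OF xy(4)] less_4_cases[OF xy(6)] xy(1,2) by auto
  qed
qed

definition opp_corner :: "'c \<times> nat \<Rightarrow> 'c \<times> nat" where
  "opp_corner = (\<lambda>(c, k). (c, (k + 2) mod 4))"

text \<open>The state \<open>S\<close> marks the edge of crossing \<open>c\<close> iff its smoothing there (A iff \<open>c \<in> S\<close>)
  joins the two coloured corners.\<close>
definition marked_hes :: "'c vdiagram \<Rightarrow> ('c \<Rightarrow> bool) \<Rightarrow> 'c set \<Rightarrow> ('c \<times> nat) set" where
  "marked_hes D col S = {h \<in> tait_hes D col. fst h \<in> S \<longleftrightarrow> col (fst h)}"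

lemma marked_hes_iff: "(c, k) \<in> marked_hes D col S \<longleftrightarrow> (c, k) \<in> tait_hes D col \<and> (c \<in> S \<longleftrightarrow> col c)"
  by (simp add: marked_hes_def)

lemma opp_corner_marked_hes: "h \<in> marked_hes D col S \<Longrightarrow> opp_corner h \<in> marked_hes D col S"
  by (cases h) (auto simp: marked_hes_iff tait_hes_iff opp_corner_def colored_corner_def dest!: less_4_cases)

text \<open>Leaving a coloured corner, a state circle follows the boundary of the annulus, unless the
  smoothing joins the coloured corners, in which case it first crosses the edge ribbon.\<close>
lemma dg_arc_smooth:
  assumes "h \<in> tait_hes D col"
  shows "dg_arc D (smooth S h) = tait_rot D (if h \<in> marked_hes D col S then opp_corner h else h)"
proof -
  obtain c k where h: "h = (c, k)" "k < 4" "colored_corner col c k"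
    using assms by (cases h) (auto simp: tait_hes_iff)
  show ?thesis
    using less_4_cases[OF h(2)] h(3) assms unfolding h(1)
    by (elim disjE) (auto simp: smooth_def marked_hes_iff colored_corner_def tait_rot_def opp_corner_def,
        simp_all add: numeral_2_eq_2)
qed

lemma bc_tait_graph:
  assumes "vdiagram_wf D" "checkerboard_coloring D col" "S \<subseteq> tait_hes D col"
  shows "bc (tait_graph D col) S
    = card (fwd_orbit (\<lambda>h. first_return (tait_rot D) S (opp_corner h)) ` S)
      + card {Q \<in> fwd_orbit (tait_rot D) ` tait_hes D col. Q \<inter> S = {}} + dg_loops D"
proof -
  let ?Q = "{Q \<in> fwd_orbit (tait_rot D) ` tait_hes D col. Q \<inter> S = {}}"
  interpret perm_on "tait_rot D" "tait_hes D col"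
    using perm_on_tait_rot[OF assms(1,2)] .
  have "{v \<in> sg_verts (tait_graph D col). \<forall>h\<in>S. sg_vert (tait_graph D col) h \<noteq> v}
    = {Q \<in> fwd_orbit (tait_rot D) ` tait_hes D col. \<forall>h\<in>S. fwd_orbit (tait_rot D) h \<noteq> Q}
      <+> {..<dg_loops D}"
    by (auto simp: Plus_def tait_graph_def orbits_eq_image_fwd_orbit fwd_orbit_def)
  also have "{Q \<in> fwd_orbit (tait_rot D) ` tait_hes D col. \<forall>h\<in>S. fwd_orbit (tait_rot D) h \<noteq> Q} = ?Q"
    using fwd_orbit_disjoint_iff by blast
  finally have verts: "{v \<in> sg_verts (tait_graph D col). \<forall>h\<in>S. sg_vert (tait_graph D col) h \<noteq> v}
    = ?Q <+> {..<dg_loops D}" .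
  have "finite ?Q"
    using finite by simp
  then have "card {v \<in> sg_verts (tait_graph D col). \<forall>h\<in>S. sg_vert (tait_graph D col) h \<noteq> v}
    = card ?Q + dg_loops D"
    unfolding verts by (simp add: card_Plus)
  then show ?thesis
    by (simp add: bc_def orbits_eq_image_fwd_orbit rot_sub_eq_first_return tait_graph_def opp_corner_def)
qed

theorem state_circles_eq_bc:
  assumes "vdiagram_wf D" "checkerboard_coloring D col"
  shows "state_circles D S' = bc (tait_graph D col) (marked_hes D col S')"
proof -
  let ?C = "tait_hes D col" and ?S = "marked_hes D col S'" and ?rot = "tait_rot D"
  let ?\<tau> = "\<lambda>h. dg_arc D (smooth S' h)"
  interpret state: swapping_involutions "dg_ends D" ?C "smooth S'" "dg_arc D"
    by (rule swapping_involutions_state[OF assms])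
  interpret rot: perm_on ?rot ?C
    by (rule perm_on_tait_rot[OF assms])
  have "?S \<subseteq> ?C"
    by (auto simp: marked_hes_def)
  have agree: "?\<tau> h = ?rot h" if "h \<in> ?C" "h \<notin> ?S" for h
    using dg_arc_smooth[OF that(1)] that(2) by simp
  have "first_return ?rot ?S (opp_corner h) = first_return ?\<tau> ?S h" if "h \<in> ?S" for h
  proof -
    have "?\<tau> h = ?rot (opp_corner h)"
      using dg_arc_smooth[of h] that \<open>?S \<subseteq> ?C\<close> by auto
    then show ?thesis
      using rot.first_return_shift[OF \<open>?S \<subseteq> ?C\<close> opp_corner_marked_hes[OF that] _ agree] by simp
  qed
  then have faces: "fwd_orbit (\<lambda>h. first_return ?rot ?S (opp_corner h)) ` ?S = fwd_orbit (first_return ?\<tau> ?S) ` ?S"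
    using state.fwd_orbit_first_return[OF \<open>?S \<subseteq> ?C\<close>] by (intro image_cong fwd_orbit_cong) auto
  have "state_circles D S' = card (fwd_orbit ?\<tau> ` ?C) + dg_loops D"
    unfolding state_circles_def state.card_adj_classes ..
  also have "\<dots> = card (fwd_orbit (first_return ?\<tau> ?S) ` ?S)
      + card {Q \<in> fwd_orbit ?\<tau> ` ?C. Q \<inter> ?S = {}} + dg_loops D"
    using state.card_fwd_orbits_first_return[OF \<open>?S \<subseteq> ?C\<close>] by simp
  also have "\<dots> = card (fwd_orbit (\<lambda>h. first_return ?rot ?S (opp_corner h)) ` ?S)
      + card {Q \<in> fwd_orbit ?rot ` ?C. Q \<inter> ?S = {}} + dg_loops D"
    using disjoint_fwd_orbits_eq[OF rot.perm_on_axioms state.perm_on_axioms agree] faces by simp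
  also have "\<dots> = bc (tait_graph D col) ?S"
    using bc_tait_graph[OF assms \<open>?S \<subseteq> ?C\<close>] by simp
  finally show ?thesis .
qed

section \<open>States and spanning subgraphs\<close>

lemma sg_tait_graph [simp]:
  "sg_hes (tait_graph D col) = tait_hes D col"
  "sg_rot (tait_graph D col) = tait_rot D"
  "sg_opp (tait_graph D col) = opp_corner"
  "sg_pos (tait_graph D col) = (\<lambda>h. col (fst h))"
  by (simp_all add: tait_graph_def opp_corner_def case_prod_beta')

definition tait_he :: "('c \<Rightarrow> bool) \<Rightarrow> 'c \<Rightarrow> 'c \<times> nat" where
  "tait_he col c = (c, if col c then 0 else 1)"

lemma tait_hes_iff_tait_he:
  "h \<in> tait_hes D col \<longleftrightarrow> fst h \<in> dg_xings D \<and> (h = tait_he col (fst h) \<or> h = opp_corner (tait_he col (fst h)))"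
  by (cases h) (auto simp: tait_hes_iff tait_he_def opp_corner_def colored_corner_def dest!: less_4_cases)

lemma opp_corner_opp_corner: "snd h < 4 \<Longrightarrow> opp_corner (opp_corner h) = h"
  by (cases h) (auto simp: opp_corner_def dest!: less_4_cases)

lemma tait_he_in_marked_hes_iff:
  "c \<in> dg_xings D \<Longrightarrow> tait_he col c \<in> marked_hes D col S \<longleftrightarrow> (c \<in> S \<longleftrightarrow> col c)"
  by (simp add: marked_hes_def tait_hes_iff_tait_he tait_he_def)

lemma bij_betw_marked_hes:
  "bij_betw (marked_hes D col) (Pow (dg_xings D)) {S. S \<subseteq> tait_hes D col \<and> (\<forall>h\<in>S. opp_corner h \<in> S)}"
proof (rule bij_betw_byWitness[where f' = "\<lambda>S. {c \<in> dg_xings D. tait_he col c \<in> S \<longleftrightarrow> col c}"])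
  show "\<forall>S'\<in>Pow (dg_xings D). {c \<in> dg_xings D. tait_he col c \<in> marked_hes D col S' \<longleftrightarrow> col c} = S'"
    by (auto simp: tait_he_in_marked_hes_iff)
  show "\<forall>S\<in>{S. S \<subseteq> tait_hes D col \<and> (\<forall>h\<in>S. opp_corner h \<in> S)}.
      marked_hes D col {c \<in> dg_xings D. tait_he col c \<in> S \<longleftrightarrow> col c} = S"
  proof
    fix S assume S: "S \<in> {S. S \<subseteq> tait_hes D col \<and> (\<forall>h\<in>S. opp_corner h \<in> S)}"
    have same: "h \<in> S \<longleftrightarrow> tait_he col (fst h) \<in> S" if "h \<in> tait_hes D col" for h
      using S that tait_hes_iff_tait_he[of h] opp_corner_opp_corner[of "tait_he col (fst h)"]
      by (auto simp: tait_he_def)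
    show "marked_hes D col {c \<in> dg_xings D. tait_he col c \<in> S \<longleftrightarrow> col c} = S"
    proof (intro equalityI subsetI)
      fix h assume "h \<in> marked_hes D col {c \<in> dg_xings D. tait_he col c \<in> S \<longleftrightarrow> col c}"
      then show "h \<in> S"
        using same by (auto simp: marked_hes_def tait_hes_iff_tait_he)
    next
      fix h assume "h \<in> S"
      moreover from this have "h \<in> tait_hes D col"
        using S by blast
      ultimately have "h \<in> tait_hes D col" "tait_he col (fst h) \<in> S"
        using same by auto
      then show "h \<in> marked_hes D col {c \<in> dg_xings D. tait_he col c \<in> S \<longleftrightarrow> col c}"
        by (simp add: marked_hes_def tait_hes_iff_tait_he)
    qed
  qed
  show "marked_hes D col ` Pow (dg_xings D) \<subseteq> {S. S \<subseteq> tait_hes D col \<and> (\<forall>h\<in>S. opp_corner h \<in> S)}"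
    using opp_corner_marked_hes by (fastforce simp: marked_hes_def)
qed auto

lemma edge_weight_prod_marked_hes:
  assumes "finite (dg_xings D)" "S' \<subseteq> dg_xings D"
  shows "(\<Prod>e\<in>sg_edges (tait_graph D col).
      if e \<subseteq> marked_hes D col S' then (if edge_pos (tait_graph D col) e then A else B)
      else (if edge_pos (tait_graph D col) e then B else A))
    = A ^ card S' * B ^ card (dg_xings D - S')"
proof -
  let ?edge = "\<lambda>c. {tait_he col c, opp_corner (tait_he col c)}"
  have "sg_edges (tait_graph D col) = ?edge ` dg_xings D"
    unfolding sg_edges_def sg_tait_graph
    by (auto simp: tait_hes_iff_tait_he image_iff opp_corner_opp_corner tait_he_def) blast+
  moreover have "inj_on ?edge (dg_xings D)"
    by (rule inj_onI) (auto simp: tait_he_def opp_corner_def doubleton_eq_iff)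
  moreover have "edge_pos (tait_graph D col) (?edge c) = col c" for c
  proof -
    have "(SOME h. h \<in> ?edge c) \<in> ?edge c"
      by (rule someI_ex) blast
    then show ?thesis
      by (auto simp: edge_pos_def tait_he_def opp_corner_def)
  qed
  moreover have "?edge c \<subseteq> marked_hes D col S' \<longleftrightarrow> (c \<in> S' \<longleftrightarrow> col c)" if "c \<in> dg_xings D" for c
    using that by (auto simp: marked_hes_def tait_hes_iff_tait_he) (auto simp: tait_he_def opp_corner_def)
  ultimately have "(\<Prod>e\<in>sg_edges (tait_graph D col).
      if e \<subseteq> marked_hes D col S' then (if edge_pos (tait_graph D col) e then A else B)
      else (if edge_pos (tait_graph D col) e then B else A))
    = (\<Prod>c\<in>dg_xings D. if c \<in> S' then A else B)"
    by (simp add: prod.reindex) (rule prod.cong, auto)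
  also have "\<dots> = A ^ card S' * B ^ card (dg_xings D - S')"
    using assms by (simp add: prod.If_cases Int_absorb1 Diff_eq)
  finally show ?thesis .
qed

theorem Fpoly_tait_graph_eq_bracket:
  assumes "vdiagram_wf D" "checkerboard_coloring D col"
  shows "Fpoly (tait_graph D col) A B d = bracket D A B d"
proof -
  have "finite (dg_xings D)"
    using assms(1) by (simp add: vdiagram_wf_def)
  have "Fpoly (tait_graph D col) A B d
    = (\<Sum>S'\<in>Pow (dg_xings D).
        (\<Prod>e\<in>sg_edges (tait_graph D col).
          if e \<subseteq> marked_hes D col S' then (if edge_pos (tait_graph D col) e then A else B)
          else (if edge_pos (tait_graph D col) e then B else A))
        * d powi (int (bc (tait_graph D col) (marked_hes D col S')) - 1))"
    unfolding Fpoly_def sg_tait_graph by (rule sum.reindex_bij_betw[OF bij_betw_marked_hes, symmetric])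
  also have "\<dots> = bracket D A B d"
    unfolding bracket_def
    using edge_weight_prod_marked_hes[OF \<open>finite (dg_xings D)\<close>] state_circles_eq_bc[OF assms]
    by (intro sum.cong) auto
  finally show ?thesis .
qed

theorem corollary4p5:
  fixes D :: "'c vdiagram" and col :: "'c \<Rightarrow> bool" and t :: real
  assumes "vdiagram_wf D" and "oriented D" and "checkerboard_coloring D col" and "t > 0"
  shows "jones D t =
    (- (t powr (-3/4))) powi (- writhe D)
      * Fpoly (tait_graph D col) (t powr (-1/4)) (t powr (1/4)) (- (t powr (-1/2)) - t powr (1/2))"
proof -
  have "t \<noteq> 0"
    using \<open>t > 0\<close> by simp
  have "(t powr (-1/4)) ^ 3 = t powr (-3/4)" "(t powr (-1/4)) ^ 2 = t powr (-1/2)"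
    "inverse (t powr (-1/4)) = t powr (1/4)" "(t powr (1/4)) ^ 2 = t powr (1/2)"
    using powr_power[OF \<open>t \<noteq> 0\<close>, of "-1/4" 3] powr_power[OF \<open>t \<noteq> 0\<close>, of "-1/4" 2]
      powr_power[OF \<open>t \<noteq> 0\<close>, of "1/4" 2] powr_minus[of t "-1/4"] by simp_all
  then show ?thesis
    unfolding jones_def Let_def Fpoly_tait_graph_eq_bracket[OF assms(1,3)] by simp
qed

end
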